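(* Let $f:X\to Y$ be a continuous map between metric spaces, let $q:[a,b]\to X$ be a rectifiable path, and put $p=f\circ q$. Then: (1) there exists $\tau\in[a,b]$ such that $d(p(a),p(b))\le D^+_{q(\tau)}f\cdot\ell(q)$; (2) $\ell(p)\le \sup_{x\in\operatorname{Im} q}D_x^+f\cdot \ell(q)$.
   Context: The length of a path $q:[a,b]\to X$ in a metric space is $\ell(q)=\sup\sum_{i=0}^{n-1}d(q(t_i),q(t_{i+1}))$ over all partitions $a=t_0\le\dots\le t_n=b$; $q$ is rectifiable if $\ell(q)<\infty$. For a continuous map $f:X\to Y$ and a non-isolated point $x\in X$, $D_x^+f=\limsup_{z\to x,\,z\neq x}\frac{d(f(z),f(x))}{d(z,x)}\in[0,\infty]$ and $D_x^-f=\liminf_{z\to x,\,z\neq x}\frac{d(f(z),f(x))}{d(z,x)}\in[0,\infty]$. It is assumed that $X$ has no isolated points, and the convention $0\cdot\infty=0$ is used. *)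

theory Defs
  imports "HOL-Analysis.Analysis"
begin

definition path_length :: "(real \<Rightarrow> 'a::metric_space) \<Rightarrow> real \<Rightarrow> real \<Rightarrow> ennreal" where
  "path_length q a b =
     (SUP nt \<in> {(n::nat, t::nat \<Rightarrow> real). t 0 = a \<and> t n = b \<and> (\<forall>i<n. t i \<le> t (Suc i))}.
        (\<Sum>i<fst nt. ennreal (dist (q (snd nt i)) (q (snd nt (Suc i))))))"

definition rectifiable :: "(real \<Rightarrow> 'a::metric_space) \<Rightarrow> real \<Rightarrow> real \<Rightarrow> bool" where
  "rectifiable q a b \<longleftrightarrow> path_length q a b < \<infinity>"

definition upper_dilation :: "('a::metric_space \<Rightarrow> 'b::metric_space) \<Rightarrow> 'a \<Rightarrow> ennreal" where
  "upper_dilation f x = Limsup (at x) (\<lambda>z. ennreal (dist (f z) (f x) / dist z x))"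

end

theory Submission
  imports Defs
begin

text \<open>
  Part (1) is proved by contradiction with Bolzano's bisection lemma. If every \<open>\<tau>\<close> satisfied
  \<open>D\<^sup>+ f (q \<tau>) \<cdot> \<ell>(q) < d(p a, p b)\<close>, then \<open>c = d(p a, p b) / \<ell>(q)\<close> would strictly exceed every
  dilation along the path, so near each \<open>q \<tau>\<close> the map \<open>f\<close> is \<open>r\<close>-Lipschitz for some \<open>r < c\<close>.
  Hence on every short parameter interval \<open>[x, y]\<close> around \<open>\<tau>\<close> either \<open>p x = p y\<close> or
  \<open>d(p x, p y) < c \<cdot> \<ell>(q|[x,y])\<close>. By the triangle inequality and superadditivity of length this
  property survives concatenation of intervals, so it holds on \<open>[a, b]\<close>, contradicting the choice
  of \<open>c\<close>. Part (2) follows by applying (1) to every interval of a partition and summing.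
\<close>

lemma sum_dist_le_path_length:
  assumes "t 0 = u" "t n = v" "\<forall>i<n. t i \<le> t (Suc i)"
  shows "(\<Sum>i<n. ennreal (dist (q (t i)) (q (t (Suc i))))) \<le> path_length q u v"
  unfolding path_length_def
  by (rule SUP_upper2[of "(n, t)"]) (use assms in auto)

lemma sum_lessThan_add_nat:
  fixes g :: "nat \<Rightarrow> 'a::comm_monoid_add"
  shows "(\<Sum>i<n + k. g i) = (\<Sum>i<n. g i) + (\<Sum>i<k. g (n + i))"
  by (induction k) (auto simp: add.assoc)

lemma sum_dist_append_le_path_length:
  assumes t: "t 0 = u" "t n = m" "\<forall>i<n. t i \<le> t (Suc i)"
    and w: "w 0 = m" "w k = v" "\<forall>i<k. w i \<le> w (Suc i)"
  shows "(\<Sum>i<n. ennreal (dist (q (t i)) (q (t (Suc i)))))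
       + (\<Sum>i<k. ennreal (dist (q (w i)) (q (w (Suc i))))) \<le> path_length q u v"
proof -
  define z where "z i = (if i \<le> n then t i else w (i - n))" for i
  have z_t: "z i = t i" if "i \<le> n" for i
    using that by (simp add: z_def)
  have z_w: "z (n + j) = w j" for j
    using t w by (auto simp: z_def)
  have z_mono: "z i \<le> z (Suc i)" if "i < n + k" for i
  proof (cases "i < n")
    case True
    then show ?thesis using t by (simp add: z_t)
  next
    case False
    define j where "j = i - n"
    have "i = n + j" "Suc i = n + Suc j" "j < k"
      using False that by (auto simp: j_def)
    then show ?thesis
      using z_w w(3) by metis
  qed
  have "(\<Sum>i<n + k. ennreal (dist (q (z i)) (q (z (Suc i))))) \<le> path_length q u v"
    by (rule sum_dist_le_path_length) (use t z_t z_w[of k] w z_mono in auto)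
  then show ?thesis
    unfolding sum_lessThan_add_nat
    by (simp add: z_t z_w del: add_Suc_right add: add_Suc_right[symmetric])
qed

lemma path_length_add_le:
  assumes "u \<le> m" "m \<le> v"
  shows "path_length q u m + path_length q m v \<le> path_length q u v"
proof -
  define P where "P x y = {(n::nat, t::nat \<Rightarrow> real). t 0 = x \<and> t n = y \<and> (\<forall>i<n. t i \<le> t (Suc i))}"
    for x y
  define s where "s nt = (\<Sum>i<fst nt. ennreal (dist (q (snd nt i)) (q (snd nt (Suc i)))))" for nt
  have length_eq: "path_length q x y = (SUP nt\<in>P x y. s nt)" for x y
    unfolding path_length_def P_def s_def by simp
  have P_nonempty: "P x y \<noteq> {}" if "x \<le> y" for x y
  proof -
    have "(1::nat, \<lambda>i::nat. if i = 0 then x else y) \<in> P x y"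
      using that by (auto simp: P_def)
    then show ?thesis by blast
  qed
  have "path_length q u m + path_length q m v = (SUP nt\<in>P u m. s nt + path_length q m v)"
    unfolding length_eq[of u m] by (rule ennreal_SUP_add_left[OF P_nonempty[OF assms(1)], symmetric])
  also have "\<dots> = (SUP nt\<in>P u m. SUP nt'\<in>P m v. s nt + s nt')"
    unfolding length_eq[of m v] ennreal_SUP_add_right[OF P_nonempty[OF assms(2)]] ..
  also have "\<dots> \<le> path_length q u v"
  proof (intro SUP_least)
    fix nt nt' assume "nt \<in> P u m" "nt' \<in> P m v"
    then obtain n t k w where "nt = (n, t)" "nt' = (k, w)"
      and "t 0 = u" "t n = m" "\<forall>i<n. t i \<le> t (Suc i)"
      and "w 0 = m" "w k = v" "\<forall>i<k. w i \<le> w (Suc i)"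
      unfolding P_def by blast
    then show "s nt + s nt' \<le> path_length q u v"
      unfolding s_def by (simp del: sum_ennreal add: sum_dist_append_le_path_length)
  qed
  finally show ?thesis .
qed

lemma path_length_mono:
  assumes "a \<le> u" "u \<le> v" "v \<le> b"
  shows "path_length q u v \<le> path_length q a b"
proof -
  have "path_length q u v \<le> path_length q a u + path_length q u v + path_length q v b"
    by simp
  also have "\<dots> \<le> path_length q a v + path_length q v b"
    using path_length_add_le[of a u v q] assms by (auto intro: add_right_mono)
  also have "\<dots> \<le> path_length q a b"
    using assms by (intro path_length_add_le) auto
  finally show ?thesis .
qed

lemma rectifiable_subpath:
  assumes "rectifiable q a b" "a \<le> u" "u \<le> v" "v \<le> b"
  shows "rectifiable q u v"
  using assms path_length_mono[of a u v b q] unfolding rectifiable_def by simp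

lemma chain_le:
  fixes t :: "nat \<Rightarrow> 'a::order"
  assumes "\<forall>i<n. t i \<le> t (Suc i)" "i \<le> j" "j \<le> n"
  shows "t i \<le> t j"
  by (rule lift_Suc_mono_le_ivl[of "{..<n}"]) (use assms in auto)

lemma sum_path_length_le:
  assumes "\<forall>i<n. t i \<le> t (Suc i)"
  shows "(\<Sum>i<n. path_length q (t i) (t (Suc i))) \<le> path_length q (t 0) (t n)"
  using assms
proof (induction n)
  case 0
  then show ?case by simp
next
  case (Suc n)
  have mono: "\<forall>i<n. t i \<le> t (Suc i)"
    using Suc.prems by simp
  have "(\<Sum>i<Suc n. path_length q (t i) (t (Suc i)))
      \<le> path_length q (t 0) (t n) + path_length q (t n) (t (Suc n))"
    using Suc.IH[OF mono] by (simp add: add_right_mono)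
  also have "\<dots> \<le> path_length q (t 0) (t (Suc n))"
    using chain_le[OF Suc.prems, of 0 n] chain_le[OF Suc.prems, of n "Suc n"]
    by (intro path_length_add_le) auto
  finally show ?case .
qed

lemma dist_add_dist_le_path_length:
  assumes "u \<le> x" "x \<le> v"
  shows "ennreal (dist (q u) (q x) + dist (q x) (q v)) \<le> path_length q u v"
proof -
  define t where "t i = (if i = 0 then u else if i = 1 then x else v)" for i :: nat
  have "(\<Sum>i<2. ennreal (dist (q (t i)) (q (t (Suc i))))) \<le> path_length q u v"
    by (rule sum_dist_le_path_length) (use assms in \<open>auto simp: t_def less_2_cases_iff\<close>)
  then show ?thesis
    by (simp add: t_def numeral_2_eq_2 ennreal_plus[symmetric] del: ennreal_plus)
qed

lemma dist_le_path_length: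
  assumes "u \<le> v"
  shows "ennreal (dist (q u) (q v)) \<le> path_length q u v"
  using dist_add_dist_le_path_length[of u u v q] assms by simp

lemma upper_dilation_lessE:
  fixes f :: "'a::metric_space \<Rightarrow> 'b::metric_space"
  assumes "upper_dilation f x < c"
  obtains r \<delta> where "0 \<le> r" "ennreal r < c" "\<delta> > 0"
    "\<And>z. dist z x < \<delta> \<Longrightarrow> dist (f z) (f x) \<le> r * dist z x"
proof -
  obtain e where e: "upper_dilation f x < e" "e < c"
    using dense assms by blast
  then obtain r where r: "e = ennreal r" "0 \<le> r"
    by (cases e) (auto simp: top_unique)
  have "eventually (\<lambda>z. ennreal (dist (f z) (f x) / dist z x) < ennreal r) (at x)"
    using e(1) unfolding upper_dilation_def r(1) by (rule Limsup_lessD)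
  then obtain \<delta> where "\<delta> > 0"
    and ratio: "\<And>z. z \<noteq> x \<Longrightarrow> dist z x < \<delta> \<Longrightarrow> ennreal (dist (f z) (f x) / dist z x) < ennreal r"
    unfolding eventually_at by blast
  have "dist (f z) (f x) \<le> r * dist z x" if "dist z x < \<delta>" for z
  proof (cases "z = x")
    case False
    then have "dist (f z) (f x) / dist z x < r"
      using ratio[OF False that] r(2) by (simp add: ennreal_less_iff)
    with False show ?thesis
      by (simp add: divide_less_eq less_imp_le)
  qed simp
  with r e(2) \<open>\<delta> > 0\<close> that show ?thesis by blast
qed

lemma ennreal_less_or_zero_add:
  fixes d d1 d2 b1 b2 b :: ennreal
  assumes "d \<le> d1 + d2" "d1 < b1 \<or> d1 = 0" "d2 < b2 \<or> d2 = 0" "b1 + b2 \<le> b"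
  shows "d < b \<or> d = 0"
  using assms
  by (metis add.commute add.right_neutral add_strict_mono dual_order.strict_trans2
      le_iff_add le_zero_eq order.strict_trans2)

lemma dist_comp_less_mult_path_length_near:
  fixes f :: "'a::metric_space \<Rightarrow> 'b::metric_space" and q :: "real \<Rightarrow> 'a"
  assumes t: "u \<le> t" "t \<le> v" and q_cont: "continuous_on {u..v} q" and q_rect: "rectifiable q u v"
    and "upper_dilation f (q t) < c"
  obtains d where "d > 0" "\<And>x y. u \<le> x \<Longrightarrow> x \<le> t \<Longrightarrow> t \<le> y \<Longrightarrow> y \<le> v \<Longrightarrow> y - x < d \<Longrightarrow>
      f (q x) = f (q y) \<or> ennreal (dist (f (q x)) (f (q y))) < c * path_length q x y"
proof -
  obtain r \<delta> where "0 \<le> r" "ennreal r < c" "\<delta> > 0"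
    and lipschitz: "\<And>z. dist z (q t) < \<delta> \<Longrightarrow> dist (f z) (f (q t)) \<le> r * dist z (q t)"
    using \<open>upper_dilation f (q t) < c\<close> by (rule upper_dilation_lessE) blast
  have "continuous (at t within {u..v}) q"
    using q_cont t by (simp add: continuous_on_eq_continuous_within)
  then obtain d where "d > 0" and d: "\<And>s. s \<in> {u..v} \<Longrightarrow> dist s t < d \<Longrightarrow> dist (q s) (q t) < \<delta>"
    unfolding continuous_within_eps_delta using \<open>\<delta> > 0\<close> by blast
  have "f (q x) = f (q y) \<or> ennreal (dist (f (q x)) (f (q y))) < c * path_length q x y"
    if xy: "u \<le> x" "x \<le> t" "t \<le> y" "y \<le> v" "y - x < d" for x y
  proof -
    have "dist (q x) (q t) < \<delta>" "dist (q y) (q t) < \<delta>"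
      using d xy by (auto simp: dist_real_def)
    then have "dist (f (q x)) (f (q t)) + dist (f (q y)) (f (q t))
        \<le> r * dist (q x) (q t) + r * dist (q y) (q t)"
      by (intro add_mono lipschitz)
    then have "dist (f (q x)) (f (q y)) \<le> r * (dist (q x) (q t) + dist (q t) (q y))"
      by (metis dist_commute dist_triangle distrib_left order.trans)
    then have "ennreal (dist (f (q x)) (f (q y)))
        \<le> ennreal (r * (dist (q x) (q t) + dist (q t) (q y)))"
      by (rule ennreal_leI)
    also have "\<dots> = ennreal r * ennreal (dist (q x) (q t) + dist (q t) (q y))"
      using \<open>0 \<le> r\<close> by (simp add: ennreal_mult)
    also have "\<dots> \<le> ennreal r * path_length q x y"
      using dist_add_dist_le_path_length[of x t y q] xy by (simp add: mult_left_mono)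
    finally have le: "ennreal (dist (f (q x)) (f (q y))) \<le> ennreal r * path_length q x y" .
    show ?thesis
    proof (cases "path_length q x y = 0")
      case True
      then show ?thesis using le by simp
    next
      case False
      have "path_length q x y < \<infinity>"
        using rectifiable_subpath[OF q_rect] xy unfolding rectifiable_def by simp
      with False \<open>ennreal r < c\<close> have "ennreal r * path_length q x y < c * path_length q x y"
        by (intro ennreal_mult_strict_right_mono) (auto simp: zero_less_iff_neq_zero)
      with le show ?thesis by (simp add: order.strict_trans1)
    qed
  qed
  with \<open>d > 0\<close> that show ?thesis by blast
qed

lemma dist_comp_less_mult_path_length:
  fixes f :: "'a::metric_space \<Rightarrow> 'b::metric_space" and q :: "real \<Rightarrow> 'a"
  assumes "u \<le> v" and q_cont: "continuous_on {u..v} q" and q_rect: "rectifiable q u v"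
    and dilation_less: "\<And>\<tau>. \<tau> \<in> {u..v} \<Longrightarrow> upper_dilation f (q \<tau>) < c"
  shows "f (q u) = f (q v) \<or> ennreal (dist (f (q u)) (f (q v))) < c * path_length q u v"
proof -
  define P where "P x y \<longleftrightarrow> u \<le> x \<longrightarrow> y \<le> v \<longrightarrow>
      f (q x) = f (q y) \<or> ennreal (dist (f (q x)) (f (q y))) < c * path_length q x y" for x y
  have "P u v"
    using \<open>u \<le> v\<close>
  proof (induction rule: Bolzano)
    case (trans x y z)
    have "ennreal (dist (f (q x)) (f (q z))) < c * path_length q x z
        \<or> ennreal (dist (f (q x)) (f (q z))) = 0" if "u \<le> x" "z \<le> v"
    proof (rule ennreal_less_or_zero_add)
      show "ennreal (dist (f (q x)) (f (q z)))
          \<le> ennreal (dist (f (q x)) (f (q y))) + ennreal (dist (f (q y)) (f (q z)))"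
        by (simp add: dist_triangle flip: ennreal_plus)
      show "c * path_length q x y + c * path_length q y z \<le> c * path_length q x z"
        using path_length_add_le[OF trans(3,4), of q] by (simp add: mult_left_mono flip: distrib_left)
    qed (use trans that in \<open>auto simp: P_def\<close>)
    then show ?case
      unfolding P_def by auto
  next
    case (local t)
    then obtain d where "d > 0" "\<And>x y. u \<le> x \<Longrightarrow> x \<le> t \<Longrightarrow> t \<le> y \<Longrightarrow> y \<le> v \<Longrightarrow> y - x < d \<Longrightarrow>
        f (q x) = f (q y) \<or> ennreal (dist (f (q x)) (f (q y))) < c * path_length q x y"
      using dist_comp_less_mult_path_length_near[OF _ _ q_cont q_rect dilation_less] by auto
    then show ?case
      unfolding P_def by blast
  qed
  then show ?thesis
    unfolding P_def by simp
qed

lemma mean_value_inequality: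
  fixes f :: "'a::metric_space \<Rightarrow> 'b::metric_space" and q :: "real \<Rightarrow> 'a"
  assumes "u \<le> v" "continuous_on {u..v} q" "rectifiable q u v"
  shows "\<exists>\<tau>\<in>{u..v}. ennreal (dist (f (q u)) (f (q v))) \<le> upper_dilation f (q \<tau>) * path_length q u v"
proof (rule ccontr)
  define D where "D = ennreal (dist (f (q u)) (f (q v)))"
  define L where "L = path_length q u v"
  assume "\<not> ?thesis"
  then have less_D: "upper_dilation f (q \<tau>) * L < D" if "\<tau> \<in> {u..v}" for \<tau>
    using that unfolding D_def L_def by (auto simp: not_le)
  have "0 < D"
    using \<open>u \<le> v\<close> by (intro order.strict_trans1[OF zero_le less_D]) auto
  then have "f (q u) \<noteq> f (q v)"
    unfolding D_def by auto
  then have "L \<noteq> 0"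
    using dist_le_path_length[OF \<open>u \<le> v\<close>, of q] unfolding L_def by auto
  have "L < \<infinity>"
    using \<open>rectifiable q u v\<close> unfolding L_def rectifiable_def .
  define c where "c = D / L"
  have cL: "c * L = D"
    using \<open>L \<noteq> 0\<close> \<open>L < \<infinity>\<close> by (simp add: c_def ennreal_divide_times)
  have "upper_dilation f (q \<tau>) < c" if "\<tau> \<in> {u..v}" for \<tau>
  proof (rule ccontr)
    assume "\<not> upper_dilation f (q \<tau>) < c"
    then have "c * L \<le> upper_dilation f (q \<tau>) * L"
      by (simp add: mult_right_mono)
    with less_D[OF that] cL show False
      by simp
  qed
  from dist_comp_less_mult_path_length[OF assms this]
  show False
    using \<open>f (q u) \<noteq> f (q v)\<close> cL unfolding D_def L_def by simp
qed

lemma path_length_le_if_dist_le: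
  assumes "\<And>u v. a \<le> u \<Longrightarrow> u \<le> v \<Longrightarrow> v \<le> b \<Longrightarrow>
      ennreal (dist (p u) (p v)) \<le> K * path_length q u v"
  shows "path_length p a b \<le> K * path_length q a b"
  unfolding path_length_def[of p]
proof (rule SUP_least)
  fix nt assume "nt \<in> {(n, t). t 0 = a \<and> t n = b \<and> (\<forall>i<n. t i \<le> t (Suc i))}"
  then obtain n t where nt: "nt = (n, t)" and t: "t 0 = a" "t n = b" "\<forall>i<n. t i \<le> t (Suc i)"
    by blast
  have "a \<le> t i \<and> t i \<le> b" if "i \<le> n" for i
    using chain_le[OF t(3), of 0 i] chain_le[OF t(3), of i n] t that by auto
  then have "ennreal (dist (p (t i)) (p (t (Suc i)))) \<le> K * path_length q (t i) (t (Suc i))"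
    if "i < n" for i
    using t that by (intro assms) auto
  then have "(\<Sum>i<n. ennreal (dist (p (t i)) (p (t (Suc i)))))
      \<le> (\<Sum>i<n. K * path_length q (t i) (t (Suc i)))"
    by (intro sum_mono) simp
  also have "\<dots> \<le> K * path_length q a b"
    using sum_path_length_le[OF t(3), of q] t by (simp add: sum_distrib_left[symmetric] mult_left_mono)
  finally show "(\<Sum>i<fst nt. ennreal (dist (p (snd nt i)) (p (snd nt (Suc i)))))
      \<le> K * path_length q a b"
    by (simp add: nt)
qed

theorem theorem2:
  fixes f :: "'a::metric_space \<Rightarrow> 'b::metric_space"
    and q :: "real \<Rightarrow> 'a" and a b :: real
  assumes no_isolated: "\<And>x::'a. x islimpt UNIV"
    and cont_f: "continuous_on UNIV f"
    and ab: "a \<le> b"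
    and path_q: "continuous_on {a..b} q"
    and rect: "rectifiable q a b"
  shows "(\<exists>\<tau>\<in>{a..b}. ennreal (dist ((f \<circ> q) a) ((f \<circ> q) b))
              \<le> upper_dilation f (q \<tau>) * path_length q a b)
       \<and> path_length (f \<circ> q) a b
              \<le> (SUP x \<in> q ` {a..b}. upper_dilation f x) * path_length q a b"
proof
  show "\<exists>\<tau>\<in>{a..b}. ennreal (dist ((f \<circ> q) a) ((f \<circ> q) b))
      \<le> upper_dilation f (q \<tau>) * path_length q a b"
    using mean_value_inequality[OF ab path_q rect, of f] by simp
  show "path_length (f \<circ> q) a b \<le> (SUP x \<in> q ` {a..b}. upper_dilation f x) * path_length q a b"
  proof (rule path_length_le_if_dist_le)
    fix u v assume uv: "a \<le> u" "u \<le> v" "v \<le> b"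
    have "continuous_on {u..v} q"
      using uv by (intro continuous_on_subset[OF path_q]) auto
    then obtain \<tau> where "\<tau> \<in> {u..v}"
      and \<tau>: "ennreal (dist (f (q u)) (f (q v))) \<le> upper_dilation f (q \<tau>) * path_length q u v"
      using mean_value_inequality[OF uv(2) _ rectifiable_subpath[OF rect uv]] by blast
    then have "upper_dilation f (q \<tau>) \<le> (SUP x \<in> q ` {a..b}. upper_dilation f x)"
      using uv by (intro SUP_upper) auto
    then have "upper_dilation f (q \<tau>) * path_length q u v
        \<le> (SUP x \<in> q ` {a..b}. upper_dilation f x) * path_length q u v"
      by (rule mult_right_mono) simp
    with \<tau> show "ennreal (dist ((f \<circ> q) u) ((f \<circ> q) v))
        \<le> (SUP x \<in> q ` {a..b}. upper_dilation f x) * path_length q u v"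
      unfolding comp_def by (rule order.trans)
  qed
qed

end
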